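(* Let $\beta\in(1,2)$. There exists a positive constant $C$, independent of $h$ and $\psi$, such that for every grid function $\psi$ as in the context, $$C\Big(\frac{2}{\pi}\Big)^{\beta}\frac{2^{\frac{\beta-2}{2}}}{4\pi^2}\,\|\psi\|^2_{L^2_h}\le\big((-\Delta_h)^{\frac{\beta}{2}}\psi,\psi\big)_{h^2}\le 2^{\frac{\beta}{2}}\frac{\pi^{\beta}}{h^{\beta}}\,\|\psi\|^2_{L^2_h}.$$
   Context: Let $L>0$, $M\in\mathbb{Z}^+$, $h=2L/M$, $x_j=-L+jh$, $y_k=-L+kh$. Consider grid functions $\psi=\{\psi_{jk}\}_{j,k\in\mathbb{Z}}$ with $\psi_{jk}=0$ unless $1\le j,k\le M-1$ (i.e. vanishing on the boundary of $(-L,L)^2$ and outside it). The inner product and norm are $(w,v)_{h^2}=h^2\sum_{j=1}^{M-1}\sum_{k=1}^{M-1}w_{jk}v_{jk}$, $\|w\|^2_{L^2_h}=(w,w)_{h^2}$. The fractional centered difference operator is $$\big((-\Delta_h)^{\frac{\beta}{2}}\psi\big)_{jk}=\frac{1}{h^\beta}\sum_{l,m\in\mathbb{Z}}a^{(\beta)}_{l,m}\psi_{j+l,k+m},\qquad a^{(\beta)}_{l,m}=\frac{1}{4\pi^2}\int_{-\pi}^{\pi}\!\!\int_{-\pi}^{\pi}\Big[4\sin^2\tfrac{\eta_1}{2}+4\sin^2\tfrac{\eta_2}{2}\Big]^{\frac{\beta}{2}}e^{-\mathbf{i}(\eta_1 l+\eta_2 m)}\,d\eta_1 d\eta_2 .$$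 *)

theory Defs
  imports "HOL-Analysis.Analysis"
begin

definition frac_coeff :: "real \<Rightarrow> int \<Rightarrow> int \<Rightarrow> complex" where
  "frac_coeff \<beta> l m =
     complex_of_real (1 / (4 * pi^2)) *
     integral (cbox (-pi, -pi) (pi, pi))
       (\<lambda>(e1::real, e2::real).
          complex_of_real ((4 * (sin (e1/2))^2 + 4 * (sin (e2/2))^2) powr (\<beta>/2)) *
          exp (- \<i> * complex_of_real (e1 * of_int l + e2 * of_int m)))"

definition frac_lap :: "real \<Rightarrow> real \<Rightarrow> (int \<Rightarrow> int \<Rightarrow> real) \<Rightarrow> int \<Rightarrow> int \<Rightarrow> complex" where
  "frac_lap \<beta> h \<psi> j k =
     complex_of_real (1 / h powr \<beta>) *
     infsum (\<lambda>(l, m). frac_coeff \<beta> l m * complex_of_real (\<psi> (j + l) (k + m))) UNIV"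

definition grid_inner :: "real \<Rightarrow> nat \<Rightarrow> (int \<Rightarrow> int \<Rightarrow> 'a::{real_algebra_1,comm_ring_1})
    \<Rightarrow> (int \<Rightarrow> int \<Rightarrow> 'a) \<Rightarrow> 'a" where
  "grid_inner h M w v =
     of_real (h^2) * (\<Sum>j = 1..int M - 1. \<Sum>k = 1..int M - 1. w j k * v j k)"

end

(*
  Writing psi^(eta) = sum_p psi_p exp(-i eta.p) for the lattice Fourier transform of psi and
  F(eta) = (4 sin^2(eta_1/2) + 4 sin^2(eta_2/2))^(beta/2) for the symbol whose Fourier
  coefficients are a(l,m), the energy is
    ((-Delta_h)^(beta/2) psi, psi) = h^(2-beta) / (4 pi^2) * integral over [-pi,pi]^2 of F |psi^|^2,
  and Parseval gives integral |psi^|^2 = 4 pi^2 sum psi_p^2.  The upper bound is F <= 8^(beta/2).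
  For the lower bound, F >= (r/2)^beta outside the square [-r,r]^2, while on that square
  |psi^|^2 <= (sum |psi_p|)^2 <= card * sum psi_p^2 (Cauchy-Schwarz); with r = 1/M the small
  square carries at most 4 sum psi_p^2 of the total 4 pi^2 sum psi_p^2, so the energy is at
  least (1/(4L))^beta / 2 * ||psi||^2.
*)
theory Submission
  imports Defs
begin

abbreviation period_square :: "(real \<times> real) set" where
  "period_square \<equiv> cbox (-pi, -pi) (pi, pi)"

definition lattice_phase :: "real \<times> real \<Rightarrow> int \<times> int \<Rightarrow> real" where
  "lattice_phase \<eta> p = fst \<eta> * of_int (fst p) + snd \<eta> * of_int (snd p)"

lemma lattice_phase_diff: "lattice_phase \<eta> (p - q) = lattice_phase \<eta> p - lattice_phase \<eta> q"
  by (simp add: lattice_phase_def algebra_simps)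

lemma continuous_on_lattice_phase: "continuous_on S (\<lambda>\<eta>. lattice_phase \<eta> p)"
  unfolding lattice_phase_def by (intro continuous_intros)

lemma integral_exp_int_freq:
  fixes n :: int
  shows "integral {-pi..pi} (\<lambda>x. exp (- \<i> * complex_of_real (x * of_int n)))
         = (if n = 0 then complex_of_real (2 * pi) else 0)"
proof (cases "n = 0")
  case True
  then show ?thesis by (simp add: scaleR_conv_of_real)
next
  case False
  define F where "F z = exp (- \<i> * z * of_int n) / (- \<i> * of_int n)" for z
  have "(F has_field_derivative exp (- \<i> * z * of_int n)) (at z)" for z
    unfolding F_def using False by (auto intro!: derivative_eq_intros)
  then have "((\<lambda>x. F (of_real x)) has_vector_derivative exp (- \<i> * complex_of_real (x * of_int n)))
              (at x within {-pi..pi})" for x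
    by (simp add: has_vector_derivative_real_field mult.assoc)
  then have "((\<lambda>x. exp (- \<i> * complex_of_real (x * of_int n))) has_integral F pi - F (- pi)) {-pi..pi}"
    by (intro fundamental_theorem_of_calculus) auto
  moreover have "F pi = F (- pi)"
    unfolding F_def by (simp add: Euler mult.commute[of _ pi])
  ultimately show ?thesis
    using False by (simp add: integral_unique)
qed

lemma integral_exp_lattice_phase:
  "integral period_square (\<lambda>\<eta>. exp (- \<i> * complex_of_real (lattice_phase \<eta> p)))
   = (if p = 0 then complex_of_real (4 * pi^2) else 0)"
proof -
  have "integral period_square (\<lambda>\<eta>. exp (- \<i> * complex_of_real (lattice_phase \<eta> p)))
      = integral {-pi..pi} (\<lambda>x. integral {-pi..pi} (\<lambda>y.
          exp (- \<i> * complex_of_real (x * of_int (fst p))) * exp (- \<i> * complex_of_real (y * of_int (snd p)))))"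
    unfolding lattice_phase_def
    by (subst integral_prod_continuous)
       (auto intro!: continuous_intros simp: cbox_interval algebra_simps simp flip: exp_add)
  also have "\<dots> = integral {-pi..pi} (\<lambda>x. exp (- \<i> * complex_of_real (x * of_int (fst p))) *
                      (if snd p = 0 then complex_of_real (2 * pi) else 0))"
    by (simp only: integral_mult_right integral_exp_int_freq)
  also have "\<dots> = (if p = 0 then complex_of_real (4 * pi^2) else 0)"
    by (simp only: integral_mult_left integral_exp_int_freq) (auto simp: prod_eq_iff power2_eq_square)
  finally show ?thesis .
qed

definition dtft :: "(int \<times> int) set \<Rightarrow> (int \<Rightarrow> int \<Rightarrow> real) \<Rightarrow> real \<times> real \<Rightarrow> complex" where
  "dtft G \<psi> \<eta> =
     (\<Sum>p\<in>G. complex_of_real (\<psi> (fst p) (snd p)) * exp (- \<i> * complex_of_real (lattice_phase \<eta> p)))"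

lemma continuous_on_norm_dtft_squared: "continuous_on S (\<lambda>\<eta>. (cmod (dtft G \<psi> \<eta>))^2)"
  unfolding dtft_def by (intro continuous_intros continuous_on_lattice_phase)

lemma norm_dtft_le: "cmod (dtft G \<psi> \<eta>) \<le> (\<Sum>p\<in>G. \<bar>\<psi> (fst p) (snd p)\<bar>)"
proof -
  have "cmod (dtft G \<psi> \<eta>)
        \<le> (\<Sum>p\<in>G. cmod (complex_of_real (\<psi> (fst p) (snd p)) * exp (- \<i> * complex_of_real (lattice_phase \<eta> p))))"
    unfolding dtft_def by (rule norm_sum)
  also have "\<dots> = (\<Sum>p\<in>G. \<bar>\<psi> (fst p) (snd p)\<bar>)"
    by (simp add: norm_mult)
  finally show ?thesis .
qed

lemma norm_dtft_squared:
  "complex_of_real ((cmod (dtft G \<psi> \<eta>))^2)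
   = (\<Sum>q\<in>G. \<Sum>p\<in>G. complex_of_real (\<psi> (fst p) (snd p) * \<psi> (fst q) (snd q)) *
        exp (- \<i> * complex_of_real (lattice_phase \<eta> (p - q))))"
proof -
  have "complex_of_real ((cmod (dtft G \<psi> \<eta>))^2) = dtft G \<psi> \<eta> * cnj (dtft G \<psi> \<eta>)"
    by (rule complex_norm_square)
  also have "\<dots> = (\<Sum>p\<in>G. \<Sum>q\<in>G. complex_of_real (\<psi> (fst p) (snd p) * \<psi> (fst q) (snd q)) *
        exp (- \<i> * complex_of_real (lattice_phase \<eta> (p - q))))"
    unfolding dtft_def cnj_sum sum_product
    by (intro sum.cong refl) (simp add: exp_cnj lattice_phase_diff algebra_simps flip: exp_add)
  also have "\<dots> = (\<Sum>q\<in>G. \<Sum>p\<in>G. complex_of_real (\<psi> (fst p) (snd p) * \<psi> (fst q) (snd q)) *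
        exp (- \<i> * complex_of_real (lattice_phase \<eta> (p - q))))"
    by (rule sum.swap)
  finally show ?thesis .
qed

lemma toeplitz_form_eq_integral:
  assumes w: "continuous_on period_square w" and G: "finite G"
  shows "(\<Sum>q\<in>G. \<Sum>p\<in>G. complex_of_real (\<psi> (fst p) (snd p) * \<psi> (fst q) (snd q)) *
            integral period_square (\<lambda>\<eta>. complex_of_real (w \<eta>) * exp (- \<i> * complex_of_real (lattice_phase \<eta> (p - q)))))
         = complex_of_real (integral period_square (\<lambda>\<eta>. w \<eta> * (cmod (dtft G \<psi> \<eta>))^2))"
proof -
  define f where "f q p \<eta> = complex_of_real (\<psi> (fst p) (snd p) * \<psi> (fst q) (snd q)) *
      (complex_of_real (w \<eta>) * exp (- \<i> * complex_of_real (lattice_phase \<eta> (p - q))))" for q p \<eta>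
  have f_integrable: "f q p integrable_on period_square" for q p
    unfolding f_def using w
    by (intro integrable_continuous continuous_intros continuous_on_lattice_phase continuous_on_of_real) auto
  have "(\<Sum>q\<in>G. \<Sum>p\<in>G. complex_of_real (\<psi> (fst p) (snd p) * \<psi> (fst q) (snd q)) *
            integral period_square (\<lambda>\<eta>. complex_of_real (w \<eta>) * exp (- \<i> * complex_of_real (lattice_phase \<eta> (p - q)))))
        = (\<Sum>q\<in>G. \<Sum>p\<in>G. integral period_square (f q p))"
    unfolding f_def integral_mult_right ..
  also have "\<dots> = integral period_square (\<lambda>\<eta>. \<Sum>q\<in>G. \<Sum>p\<in>G. f q p \<eta>)"
    using G f_integrable by (simp add: integral_sum integrable_sum)
  also have "\<dots> = integral period_square (\<lambda>\<eta>. complex_of_real (w \<eta> * (cmod (dtft G \<psi> \<eta>))^2))"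
    unfolding f_def norm_dtft_squared of_real_mult[of "w _"] sum_distrib_left
    by (simp add: mult_ac)
  also have "\<dots> = complex_of_real (integral period_square (\<lambda>\<eta>. w \<eta> * (cmod (dtft G \<psi> \<eta>))^2))"
  proof -
    have "(\<lambda>\<eta>. w \<eta> * (cmod (dtft G \<psi> \<eta>))^2) integrable_on period_square"
      using w by (intro integrable_continuous continuous_intros continuous_on_norm_dtft_squared)
    from integral_linear[OF this bounded_linear_of_real] show ?thesis
      by (simp add: o_def del: of_real_mult of_real_power)
  qed
  finally show ?thesis .
qed

lemma integral_norm_dtft_squared:
  assumes "finite G"
  shows "integral period_square (\<lambda>\<eta>. (cmod (dtft G \<psi> \<eta>))^2) = 4 * pi^2 * (\<Sum>p\<in>G. (\<psi> (fst p) (snd p))^2)"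
proof -
  have "complex_of_real (integral period_square (\<lambda>\<eta>. 1 * (cmod (dtft G \<psi> \<eta>))^2))
      = (\<Sum>q\<in>G. \<Sum>p\<in>G. complex_of_real (\<psi> (fst p) (snd p) * \<psi> (fst q) (snd q)) *
            integral period_square (\<lambda>\<eta>. complex_of_real 1 * exp (- \<i> * complex_of_real (lattice_phase \<eta> (p - q)))))"
    by (rule toeplitz_form_eq_integral[symmetric]) (use assms in auto)
  also have "\<dots> = (\<Sum>q\<in>G. \<Sum>p\<in>G. complex_of_real (\<psi> (fst p) (snd p) * \<psi> (fst q) (snd q)) *
            (if p = q then complex_of_real (4 * pi^2) else 0))"
    by (simp only: of_real_1 mult_1_left integral_exp_lattice_phase right_minus_eq)
  also have "\<dots> = complex_of_real (4 * pi^2 * (\<Sum>p\<in>G. (\<psi> (fst p) (snd p))^2))"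
    using assms by (simp add: sum_distrib_left power2_eq_square mult_ac if_distrib sum.delta cong: if_cong)
  finally show ?thesis by (simp only: of_real_eq_iff mult_1_left)
qed

definition frac_symbol :: "real \<Rightarrow> real \<times> real \<Rightarrow> real" where
  "frac_symbol \<beta> \<eta> = (4 * (sin (fst \<eta> / 2))^2 + 4 * (sin (snd \<eta> / 2))^2) powr (\<beta> / 2)"

lemma continuous_on_frac_symbol: "0 < \<beta> \<Longrightarrow> continuous_on S (frac_symbol \<beta>)"
  unfolding frac_symbol_def by (intro continuous_on_powr' continuous_intros) auto

lemma frac_coeff_eq_integral:
  "frac_coeff \<beta> (fst p) (snd p) = complex_of_real (1 / (4 * pi^2)) *
     integral period_square (\<lambda>\<eta>. complex_of_real (frac_symbol \<beta> \<eta>) * exp (- \<i> * complex_of_real (lattice_phase \<eta> p)))"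
  unfolding frac_coeff_def frac_symbol_def lattice_phase_def by (simp add: case_prod_unfold)

lemma frac_lap_eq_finite_sum:
  assumes G: "finite G" and supp: "\<And>j k. (j, k) \<notin> G \<Longrightarrow> \<psi> j k = 0"
  shows "frac_lap \<beta> h \<psi> j k = complex_of_real (1 / h powr \<beta>) *
           (\<Sum>p\<in>G. frac_coeff \<beta> (fst p - j) (snd p - k) * complex_of_real (\<psi> (fst p) (snd p)))"
proof -
  define f where "f = (\<lambda>(l, m). frac_coeff \<beta> l m * complex_of_real (\<psi> (j + l) (k + m)))"
  define shift where "shift p = (fst p - j, snd p - k)" for p :: "int \<times> int"
  have "infsum f UNIV = infsum f (shift ` G)"
  proof (rule infsum_cong_neutral)
    fix x assume "x \<in> UNIV - shift ` G"
    then have "(j + fst x, k + snd x) \<notin> G"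
      by (metis DiffD2 add_diff_cancel_left' fst_conv image_eqI shift_def snd_conv surjective_pairing)
    then show "f x = 0" by (simp add: f_def supp case_prod_unfold)
  qed auto
  also have "\<dots> = sum (f \<circ> shift) G"
    using G by (simp add: sum.reindex inj_on_def shift_def prod_eq_iff)
  finally show ?thesis
    unfolding frac_lap_def f_def by (simp add: shift_def case_prod_unfold)
qed

lemma frac_lap_form_eq_integral:
  assumes G: "finite G" and supp: "\<And>j k. (j, k) \<notin> G \<Longrightarrow> \<psi> j k = 0" and \<beta>: "0 < \<beta>"
  shows "(\<Sum>q\<in>G. frac_lap \<beta> h \<psi> (fst q) (snd q) * complex_of_real (\<psi> (fst q) (snd q)))
       = complex_of_real (integral period_square (\<lambda>\<eta>. frac_symbol \<beta> \<eta> * (cmod (dtft G \<psi> \<eta>))^2)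
                          / (4 * pi^2 * h powr \<beta>))"
proof -
  have "(\<Sum>q\<in>G. frac_lap \<beta> h \<psi> (fst q) (snd q) * complex_of_real (\<psi> (fst q) (snd q)))
      = complex_of_real (1 / (4 * pi^2 * h powr \<beta>)) *
         (\<Sum>q\<in>G. \<Sum>p\<in>G. complex_of_real (\<psi> (fst p) (snd p) * \<psi> (fst q) (snd q)) *
            integral period_square (\<lambda>\<eta>. complex_of_real (frac_symbol \<beta> \<eta>) *
              exp (- \<i> * complex_of_real (lattice_phase \<eta> (p - q)))))"
    using frac_coeff_eq_integral[of \<beta> "_ - _"]
    by (simp add: frac_lap_eq_finite_sum[OF G supp] sum_distrib_left sum_distrib_right mult_ac)
  also have "\<dots> = complex_of_real (1 / (4 * pi^2 * h powr \<beta>)) *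
      complex_of_real (integral period_square (\<lambda>\<eta>. frac_symbol \<beta> \<eta> * (cmod (dtft G \<psi> \<eta>))^2))"
    unfolding toeplitz_form_eq_integral[OF continuous_on_frac_symbol[OF \<beta>] G] ..
  finally show ?thesis by simp
qed

lemma power2_powr_half: "(x^2) powr (a / 2) = \<bar>x :: real\<bar> powr a"
  by (metis powr_powr square_powr_half times_divide_eq_left mult_1)

lemma sin_ge_half_self:
  fixes y :: real
  assumes "0 \<le> y" "y \<le> 1"
  shows "y / 2 \<le> sin y"
proof -
  have "\<bar>sin y - (\<Sum>m<3. sin_coeff m * y ^ m)\<bar> \<le> inverse (fact 3) * \<bar>y\<bar> ^ 3"
    by (rule Maclaurin_sin_bound)
  moreover have "(\<Sum>m<3. sin_coeff m * y ^ m) = y"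
    by (simp add: numeral_3_eq_3 sin_coeff_def)
  moreover have "inverse (fact 3) * \<bar>y\<bar> ^ 3 = y^3 / 6"
    using assms by (simp add: numeral_3_eq_3)
  moreover have "y^3 \<le> y"
    using power_decreasing[of 1 3 y] assms by simp
  ultimately show ?thesis by linarith
qed

lemma four_sin_half_squared_ge:
  assumes "0 \<le> r" "r \<le> 2" "r \<le> \<bar>x\<bar>" "\<bar>x\<bar> \<le> pi"
  shows "(r / 2)^2 \<le> 4 * (sin (x / 2))^2"
proof -
  have "r / 4 \<le> sin (r / 2)"
    using sin_ge_half_self[of "r / 2"] assms by simp
  also have "\<dots> \<le> sin (\<bar>x\<bar> / 2)"
    using assms by (intro sin_monotone_2pi_le) auto
  finally have "(r / 4)^2 \<le> (sin (\<bar>x\<bar> / 2))^2"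
    using assms by (intro power_mono) auto
  moreover have "(sin (\<bar>x\<bar> / 2))^2 = (sin (x / 2))^2"
    by (cases "0 \<le> x") auto
  ultimately show ?thesis by (simp add: power2_eq_square)
qed

lemma frac_symbol_nonneg: "0 \<le> frac_symbol \<beta> \<eta>"
  unfolding frac_symbol_def by simp

lemma frac_symbol_le: "0 \<le> \<beta> \<Longrightarrow> frac_symbol \<beta> \<eta> \<le> 8 powr (\<beta> / 2)"
  unfolding frac_symbol_def
  by (intro powr_mono2) (auto intro: add_mono[where b = 4 and d = 4, simplified] simp: abs_square_le_1)

lemma frac_symbol_ge:
  assumes \<beta>: "0 \<le> \<beta>" and r: "0 \<le> r" "r \<le> 2"
    and \<eta>: "\<eta> \<in> period_square" "\<eta> \<notin> cbox (-r, -r) (r, r)"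
  shows "(r / 2) powr \<beta> \<le> frac_symbol \<beta> \<eta>"
proof -
  obtain a b where ab: "\<eta> = (a, b)" by fastforce
  have "\<bar>a\<bar> \<le> pi" "\<bar>b\<bar> \<le> pi" "r < \<bar>a\<bar> \<or> r < \<bar>b\<bar>"
    using \<eta> by (auto simp: ab cbox_Pair_iff abs_le_iff)
  then have "(r / 2)^2 \<le> 4 * (sin (a / 2))^2 + 4 * (sin (b / 2))^2"
    using four_sin_half_squared_ge[OF r, of a] four_sin_half_squared_ge[OF r, of b]
    by (smt (verit) zero_le_power2)
  then have "((r / 2)^2) powr (\<beta> / 2) \<le> frac_symbol \<beta> \<eta>"
    unfolding frac_symbol_def ab using \<beta> by (intro powr_mono2) auto
  then show ?thesis
    using r by (simp add: power2_powr_half)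
qed

lemma integral_frac_symbol_dtft_le:
  assumes G: "finite G" and \<beta>: "0 < \<beta>"
  shows "integral period_square (\<lambda>\<eta>. frac_symbol \<beta> \<eta> * (cmod (dtft G \<psi> \<eta>))^2)
         \<le> 8 powr (\<beta> / 2) * (4 * pi^2 * (\<Sum>p\<in>G. (\<psi> (fst p) (snd p))^2))"
proof -
  have "integral period_square (\<lambda>\<eta>. frac_symbol \<beta> \<eta> * (cmod (dtft G \<psi> \<eta>))^2)
        \<le> integral period_square (\<lambda>\<eta>. 8 powr (\<beta> / 2) * (cmod (dtft G \<psi> \<eta>))^2)"
    using \<beta> by (intro integral_le integrable_continuous continuous_intros continuous_on_frac_symbol
        continuous_on_norm_dtft_squared mult_right_mono frac_symbol_le) auto
  also have "\<dots> = 8 powr (\<beta> / 2) * (4 * pi^2 * (\<Sum>p\<in>G. (\<psi> (fst p) (snd p))^2))"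
    by (simp add: integral_norm_dtft_squared[OF G])
  finally show ?thesis .
qed

lemma integral_frac_symbol_dtft_ge:
  fixes r :: real
  assumes G: "finite G" and \<beta>: "0 < \<beta>" and r: "0 < r" "r \<le> 2"
  shows "(r / 2) powr \<beta> * (4 * pi^2 - 4 * r^2 * card G) * (\<Sum>p\<in>G. (\<psi> (fst p) (snd p))^2)
         \<le> integral period_square (\<lambda>\<eta>. frac_symbol \<beta> \<eta> * (cmod (dtft G \<psi> \<eta>))^2)"
proof -
  define \<tau> where "\<tau> = (r / 2) powr \<beta>"
  define S where "S = cbox (-r, -r) (r, r)"
  define B where "B = (\<Sum>p\<in>G. \<bar>\<psi> (fst p) (snd p)\<bar>)^2"
  define \<Phi> where "\<Phi> \<eta> = (cmod (dtft G \<psi> \<eta>))^2" for \<eta>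
  have \<Phi>_integrable: "\<Phi> integrable_on period_square"
    unfolding \<Phi>_def by (intro integrable_continuous continuous_on_norm_dtft_squared)
  have \<Phi>_integral: "integral period_square \<Phi> = 4 * pi^2 * (\<Sum>p\<in>G. (\<psi> (fst p) (snd p))^2)"
    unfolding \<Phi>_def by (rule integral_norm_dtft_squared[OF G])
  have "S \<subseteq> period_square"
    unfolding S_def using r pi_gt3 by (intro subset_box_imp) (auto simp: Basis_prod_def)
  then have S_part: "((\<lambda>\<eta>. if \<eta> \<in> S then \<tau> * B else 0) has_integral 4 * r^2 * (\<tau> * B)) period_square"
    using has_integral_restrict_closed_subinterval[OF has_integral_const[of "\<tau> * B" "(-r, -r)" "(r, r)"]] r
    by (simp add: S_def content_Pair power2_eq_square)
  \<comment> \<open>Away from the origin the symbol is at least \<tau>; near it, \<Phi> is at most B.\<close>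
  have "integral period_square (\<lambda>\<eta>. \<tau> * \<Phi> \<eta> - (if \<eta> \<in> S then \<tau> * B else 0))
        \<le> integral period_square (\<lambda>\<eta>. frac_symbol \<beta> \<eta> * \<Phi> \<eta>)"
  proof (rule integral_le)
    show "(\<lambda>\<eta>. \<tau> * \<Phi> \<eta> - (if \<eta> \<in> S then \<tau> * B else 0)) integrable_on period_square"
      using S_part \<Phi>_integrable by (intro integrable_diff integrable_on_mult_right) auto
    show "(\<lambda>\<eta>. frac_symbol \<beta> \<eta> * \<Phi> \<eta>) integrable_on period_square"
      unfolding \<Phi>_def using \<beta>
      by (intro integrable_continuous continuous_intros continuous_on_frac_symbol continuous_on_norm_dtft_squared)
    fix \<eta> assume \<eta>: "\<eta> \<in> period_square"
    show "\<tau> * \<Phi> \<eta> - (if \<eta> \<in> S then \<tau> * B else 0) \<le> frac_symbol \<beta> \<eta> * \<Phi> \<eta>"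
    proof (cases "\<eta> \<in> S")
      case True
      have "\<tau> * \<Phi> \<eta> \<le> \<tau> * B"
        unfolding \<tau>_def \<Phi>_def B_def by (intro mult_left_mono power_mono norm_dtft_le) auto
      moreover have "0 \<le> frac_symbol \<beta> \<eta> * \<Phi> \<eta>"
        unfolding \<Phi>_def by (simp add: frac_symbol_nonneg)
      ultimately show ?thesis
        using True by simp
    next
      case False
      then have "\<tau> \<le> frac_symbol \<beta> \<eta>"
        unfolding \<tau>_def S_def using \<beta> r \<eta> by (intro frac_symbol_ge) auto
      then show ?thesis
        using False by (simp add: \<Phi>_def mult_right_mono)
    qed
  qed
  moreover have "integral period_square (\<lambda>\<eta>. \<tau> * \<Phi> \<eta> - (if \<eta> \<in> S then \<tau> * B else 0))
      = \<tau> * (4 * pi^2 * (\<Sum>p\<in>G. (\<psi> (fst p) (snd p))^2)) - 4 * r^2 * (\<tau> * B)"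
    using S_part \<Phi>_integrable \<Phi>_integral
    by (subst integral_diff) (auto intro: integrable_on_mult_right simp: integral_unique)
  moreover have "B \<le> card G * (\<Sum>p\<in>G. (\<psi> (fst p) (snd p))^2)"
    unfolding B_def using sum_squared_le_sum_of_squares[of "\<lambda>p. \<bar>\<psi> (fst p) (snd p)\<bar>" G]
    by (simp add: mult.commute)
  then have "4 * r^2 * (\<tau> * B) \<le> 4 * r^2 * (\<tau> * (card G * (\<Sum>p\<in>G. (\<psi> (fst p) (snd p))^2)))"
    unfolding \<tau>_def by (intro mult_left_mono) auto
  ultimately show ?thesis
    unfolding \<tau>_def \<Phi>_def by (simp add: algebra_simps)
qed

definition grid_interior :: "nat \<Rightarrow> (int \<times> int) set" where
  "grid_interior M = {1..int M - 1} \<times> {1..int M - 1}"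

lemma finite_grid_interior: "finite (grid_interior M)"
  unfolding grid_interior_def by simp

lemma card_grid_interior_le: "card (grid_interior M) \<le> M^2"
proof -
  have "card (grid_interior M) = nat (int M - 1) * nat (int M - 1)"
    unfolding grid_interior_def by (simp add: card_cartesian_product)
  also have "\<dots> \<le> M * M"
    by (intro mult_mono) auto
  finally show ?thesis
    by (simp add: power2_eq_square)
qed

lemma grid_inner_eq_sum:
  "grid_inner h M w v = of_real (h^2) * (\<Sum>p\<in>grid_interior M. w (fst p) (snd p) * v (fst p) (snd p))"
  unfolding grid_inner_def grid_interior_def by (simp add: sum.cartesian_product case_prod_unfold)

lemma grid_frac_energy_eq_integral:
  assumes supp: "\<And>j k. (j, k) \<notin> grid_interior M \<Longrightarrow> \<psi> j k = 0" and \<beta>: "0 < \<beta>"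
  shows "Re (grid_inner h M (frac_lap \<beta> h \<psi>) (\<lambda>j k. complex_of_real (\<psi> j k)))
         = h^2 / (4 * pi^2 * h powr \<beta>) *
           integral period_square (\<lambda>\<eta>. frac_symbol \<beta> \<eta> * (cmod (dtft (grid_interior M) \<psi> \<eta>))^2)"
proof -
  have "grid_inner h M (frac_lap \<beta> h \<psi>) (\<lambda>j k. complex_of_real (\<psi> j k))
        = complex_of_real (h^2) *
          (\<Sum>q\<in>grid_interior M. frac_lap \<beta> h \<psi> (fst q) (snd q) * complex_of_real (\<psi> (fst q) (snd q)))"
    by (rule grid_inner_eq_sum)
  also have "\<dots> = complex_of_real (h^2) * complex_of_real
      (integral period_square (\<lambda>\<eta>. frac_symbol \<beta> \<eta> * (cmod (dtft (grid_interior M) \<psi> \<eta>))^2)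
        / (4 * pi^2 * h powr \<beta>))"
    by (subst frac_lap_form_eq_integral) (use finite_grid_interior supp \<beta> in auto)
  finally show ?thesis
    by simp
qed

lemma grid_frac_energy_le:
  assumes supp: "\<And>j k. (j, k) \<notin> grid_interior M \<Longrightarrow> \<psi> j k = 0" and \<beta>: "0 < \<beta>" and h: "0 < h"
  shows "Re (grid_inner h M (frac_lap \<beta> h \<psi>) (\<lambda>j k. complex_of_real (\<psi> j k)))
         \<le> 2 powr (\<beta> / 2) * pi powr \<beta> / h powr \<beta> * grid_inner h M \<psi> \<psi>"
proof -
  define S where "S = (\<Sum>p\<in>grid_interior M. (\<psi> (fst p) (snd p))^2)"
  have energy: "Re (grid_inner h M (frac_lap \<beta> h \<psi>) (\<lambda>j k. complex_of_real (\<psi> j k)))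
      = h^2 / (4 * pi^2 * h powr \<beta>) *
        integral period_square (\<lambda>\<eta>. frac_symbol \<beta> \<eta> * (cmod (dtft (grid_interior M) \<psi> \<eta>))^2)"
    by (rule grid_frac_energy_eq_integral) (use supp \<beta> in auto)
  have "8 powr (\<beta> / 2) \<le> (2 * pi^2) powr (\<beta> / 2)"
    using power_mono[of 3 pi 2] pi_gt3 \<beta> by (intro powr_mono2) auto
  also have "\<dots> = 2 powr (\<beta> / 2) * pi powr \<beta>"
    by (simp add: powr_mult power2_powr_half)
  finally have symbol_bound: "8 powr (\<beta> / 2) \<le> 2 powr (\<beta> / 2) * pi powr \<beta>" .
  have "Re (grid_inner h M (frac_lap \<beta> h \<psi>) (\<lambda>j k. complex_of_real (\<psi> j k)))
        \<le> h^2 / (4 * pi^2 * h powr \<beta>) * (8 powr (\<beta> / 2) * (4 * pi^2 * S))"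
    unfolding energy S_def
    by (intro mult_left_mono integral_frac_symbol_dtft_le finite_grid_interior \<beta>) auto
  also have "\<dots> = 8 powr (\<beta> / 2) / h powr \<beta> * (h^2 * S)"
    by (simp add: field_simps)
  also have "\<dots> \<le> 2 powr (\<beta> / 2) * pi powr \<beta> / h powr \<beta> * (h^2 * S)"
    using symbol_bound by (intro mult_right_mono divide_right_mono) (auto simp: S_def sum_nonneg)
  finally show ?thesis
    by (simp add: grid_inner_eq_sum S_def power2_eq_square)
qed

lemma grid_frac_energy_ge:
  assumes supp: "\<And>j k. (j, k) \<notin> grid_interior M \<Longrightarrow> \<psi> j k = 0"
    and \<beta>: "0 < \<beta>" and h: "0 < h" and M: "0 < M"
  shows "(1 / (2 * M * h)) powr \<beta> / 2 * grid_inner h M \<psi> \<psi>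
         \<le> Re (grid_inner h M (frac_lap \<beta> h \<psi>) (\<lambda>j k. complex_of_real (\<psi> j k)))"
proof -
  define r where "r = 1 / real M"
  define S where "S = (\<Sum>p\<in>grid_interior M. (\<psi> (fst p) (snd p))^2)"
  have energy: "Re (grid_inner h M (frac_lap \<beta> h \<psi>) (\<lambda>j k. complex_of_real (\<psi> j k)))
      = h^2 / (4 * pi^2 * h powr \<beta>) *
        integral period_square (\<lambda>\<eta>. frac_symbol \<beta> \<eta> * (cmod (dtft (grid_interior M) \<psi> \<eta>))^2)"
    by (rule grid_frac_energy_eq_integral) (use supp \<beta> in auto)
  have r: "0 < r" "r \<le> 2"
    using M by (auto simp: r_def field_simps)
  have "4 * r^2 * card (grid_interior M) \<le> 4 * r^2 * M^2"
    using card_grid_interior_le[of M] by (intro mult_left_mono) (auto simp flip: of_nat_power)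
  also have "\<dots> = 4"
    using M by (simp add: r_def field_simps)
  also have "\<dots> \<le> 2 * pi^2"
    using power_mono[of 3 pi 2] pi_gt3 by simp
  finally have "(r / 2) powr \<beta> * (2 * pi^2) * S
                \<le> (r / 2) powr \<beta> * (4 * pi^2 - 4 * r^2 * card (grid_interior M)) * S"
    by (intro mult_right_mono mult_left_mono) (auto simp: S_def sum_nonneg)
  also have "\<dots> \<le> integral period_square (\<lambda>\<eta>. frac_symbol \<beta> \<eta> * (cmod (dtft (grid_interior M) \<psi> \<eta>))^2)"
    unfolding S_def by (rule integral_frac_symbol_dtft_ge[OF finite_grid_interior \<beta> r])
  finally have lower: "h^2 / (4 * pi^2 * h powr \<beta>) * ((r / 2) powr \<beta> * (2 * pi^2) * S)
      \<le> Re (grid_inner h M (frac_lap \<beta> h \<psi>) (\<lambda>j k. complex_of_real (\<psi> j k)))"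
    unfolding energy by (intro mult_left_mono) auto
  have "(1 / (2 * M * h)) powr \<beta> = (r / 2) powr \<beta> / h powr \<beta>"
    using r h by (simp add: r_def mult_ac flip: powr_divide)
  then have "(1 / (2 * M * h)) powr \<beta> / 2 * grid_inner h M \<psi> \<psi>
             = h^2 / (4 * pi^2 * h powr \<beta>) * ((r / 2) powr \<beta> * (2 * pi^2) * S)"
    by (simp add: grid_inner_eq_sum S_def power2_eq_square mult_ac)
  with lower show ?thesis
    by simp
qed

theorem lemma2p10:
  fixes \<beta> L :: real
  assumes "1 < \<beta>" and "\<beta> < 2" and "0 < L"
  shows "\<exists>C > 0. \<forall>(M::nat) (\<psi>::int \<Rightarrow> int \<Rightarrow> real).
           M > 0 \<longrightarrow>
           (\<forall>j k. \<not> (1 \<le> j \<and> j \<le> int M - 1 \<and> 1 \<le> k \<and> k \<le> int M - 1) \<longrightarrow> \<psi> j k = 0) \<longrightarrow>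
           (let h = 2 * L / real M;
                Q = Re (grid_inner h M (frac_lap \<beta> h \<psi>) (\<lambda>j k. complex_of_real (\<psi> j k)));
                N = grid_inner h M \<psi> \<psi>
            in C * (2 / pi) powr \<beta> * (2 powr ((\<beta> - 2) / 2) / (4 * pi^2)) * N \<le> Q
               \<and> Q \<le> 2 powr (\<beta> / 2) * pi powr \<beta> / h powr \<beta> * N)"
proof -
  have \<beta>: "0 < \<beta>" using assms by simp
  define K where "K = (2 / pi) powr \<beta> * (2 powr ((\<beta> - 2) / 2) / (4 * pi^2))"
  define c where "c = (1 / (4 * L)) powr \<beta> / 2"
  have "0 < K" "0 < c" using assms by (auto simp: K_def c_def)
  show ?thesis
  proof (intro exI[of _ "c / K"] conjI allI impI)
    show "0 < c / K" using \<open>0 < K\<close> \<open>0 < c\<close> by simp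
    fix M :: nat and \<psi> :: "int \<Rightarrow> int \<Rightarrow> real"
    assume M: "M > 0"
      and "\<forall>j k. \<not> (1 \<le> j \<and> j \<le> int M - 1 \<and> 1 \<le> k \<and> k \<le> int M - 1) \<longrightarrow> \<psi> j k = 0"
    then have supp: "\<And>j k. (j, k) \<notin> grid_interior M \<Longrightarrow> \<psi> j k = 0"
      by (auto simp: grid_interior_def)
    define h where "h = 2 * L / real M"
    have h: "0 < h" using M assms by (simp add: h_def)
    have Mh: "2 * M * h = 4 * L" using M by (simp add: h_def)
    have C_eq: "c / K * (2 / pi) powr \<beta> * (2 powr ((\<beta> - 2) / 2) / (4 * pi^2)) = (1 / (2 * M * h)) powr \<beta> / 2"
      using \<open>0 < K\<close> unfolding Mh by (simp add: K_def c_def)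
    show "let h = 2 * L / real M;
                Q = Re (grid_inner h M (frac_lap \<beta> h \<psi>) (\<lambda>j k. complex_of_real (\<psi> j k)));
                N = grid_inner h M \<psi> \<psi>
            in c / K * (2 / pi) powr \<beta> * (2 powr ((\<beta> - 2) / 2) / (4 * pi^2)) * N \<le> Q
               \<and> Q \<le> 2 powr (\<beta> / 2) * pi powr \<beta> / h powr \<beta> * N"
      using grid_frac_energy_ge[of M \<psi>, OF supp \<beta> h M] grid_frac_energy_le[of M \<psi>, OF supp \<beta> h]
      unfolding Let_def h_def[symmetric] C_eq by simp
  qed
qed

end
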